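(* Let $S$ be a sign string of length $n$ and $J$ a state string such that $(S,J)$ is a dominant lattice path, and let $w^S_J\in\mathrm{Inv}(V^S)$ be the value of the web produced by the growth algorithm from $(S,J)$. Then $$w^S_J=e^S_J+\sum_{J'<J}c(S,J,J')\,e^S_{J'}$$ for some coefficients $c(S,J,J')\in\mathbb{N}[v,v^{-1}]$ (polynomials in $v^{\pm1}$ with nonnegative integer coefficients), where state strings are ordered lexicographically (with $-1<0<1$).
   Context: Let $v$ be an indeterminate, $q^{1/2}=-v$, ground field $\mathbb{C}(v)$. $V^+$ and $V^-$ are the 3-dimensional representations of $U_q(\mathfrak{sl}(3))$ (tensor products via $\bar\Delta(E_i)=E_i\otimes1+K_i^{-1}\otimes E_i$, $\bar\Delta(F_i)=F_i\otimes K_i+1\otimes F_i$, $\bar\Delta(K_i)=K_i\otimes K_i$) with bases $e^\pm_1,e^\pm_0,e^\pm_{-1}$: on $V^+$, $E_1e^+_0=e^+_1$, $F_1e^+_1=e^+_0$, $E_2e^+_{-1}=e^+_0$, $F_2e^+_0=e^+_{-1}$, $K_1=\mathrm{diag}(q^{1/2},q^{-1/2},1)$, $K_2=\mathrm{diag}(1,q^{1/2},q^{-1/2})$ on $(e^+_1,e^+_0,e^+_{-1})$; on $V^-$, $E_1e^-_{-1}=e^-_0$, $F_1e^-_0=e^-_{-1}$, $E_2e^-_0=e^-_1$, $F_2e^-_1=e^-_0$, $K_1=\mathrm{diag}(1,q^{1/2},q^{-1/2})$, $K_2=\mathrm{diag}(q^{1/2},q^{-1/2},1)$ on $(e^-_1,e^-_0,e^-_{-1})$;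 other $E_i,F_i$ on basis vectors are $0$. For $S=(s_1,\dots,s_n)\in\{+,-\}^n$ and $J\in\{-1,0,1\}^n$: $V^S=V^{s_1}\otimes\cdots\otimes V^{s_n}$, $e^S_J=e^{s_1}_{j_1}\otimes\cdots\otimes e^{s_n}_{j_n}$. Dominance: with $\mu^\pm$ fundamental weights, $\alpha_i$ simple roots, $\mathrm{wt}(e^+_1)=\mu^+$, $\mathrm{wt}(e^+_0)=\mu^+-\alpha_1$, $\mathrm{wt}(e^+_{-1})=\mu^+-\alpha_1-\alpha_2$, $\mathrm{wt}(e^-_1)=\mu^-$, $\mathrm{wt}(e^-_0)=\mu^--\alpha_2$, $\mathrm{wt}(e^-_{-1})=\mu^--\alpha_1-\alpha_2$; $(S,J)$ is dominant if the partial sums $\pi_k=\sum_{\ell\le k}\mathrm{wt}(e^{s_\ell}_{j_\ell})$ are nonnegative integral combinations of $\mu^+,\mu^-$ and $\pi_n=0$. Elementary tensors: $b^{+-}=e^+_1\otimes e^-_{-1}+v^{-1}e^+_0\otimes e^-_0+v^{-2}e^+_{-1}\otimes e^-_1$, $b^{-+}$ likewise with signs swapped; $t^{---}=e^-_1\otimes e^-_0\otimes e^-_{-1}+v^{-1}e^-_0\otimes e^-_1\otimes e^-_{-1}+v^{-1}e^-_1\otimes e^-_{-1}\otimes e^-_0+v^{-2}e^-_0\otimes e^-_{-1}\otimes e^-_1+v^{-2}e^-_{-1}\otimes e^-_1\otimes e^-_0+v^{-3}e^-_{-1}\otimes e^-_0\otimes e^-_1$, $t^{+++}$ likewise with $+$;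 $\sigma_{\pm\mp}(e^\pm_{-1}\otimes e^\mp_1)=1$, $\sigma_{\pm\mp}(e^\pm_0\otimes e^\mp_0)=v$, $\sigma_{\pm\mp}(e^\pm_1\otimes e^\mp_{-1})=v^2$, other pairs $0$. Webs and values: a web with boundary $S$ is an oriented graph in the closed lower half-plane with endpoints $1..n$ on $y=0$ left to right, other vertices trivalent sources or sinks, edge at endpoint $k$ pointing toward it iff $s_k=+$. Its value is computed after isotoping so each trivalent vertex has all edges leaving upward, by reading horizontal slices bottom to top (strands labeled $+$ if pointing up, $-$ if down): a cup with legs $(a,b)$ inserts $b^{ab}$, a vertex inserts $t^{+++}$ or $t^{---}$, a cap with legs $(a,b)$ applies $\sigma_{ab}$; this is isotopy invariant. Growth algorithm: starting from $n$ parallel strands with strings $(S,J)$, repeatedly apply to adjacent positions with signs $(s,s')$ and states $(j,j')$ one of: if $s'\ne s$ and $(j,j')\in\{(1,0),(0,0),(0,-1)\}$, attach an "H" (two trivalent vertices joined by a horizontal edge, each joined to its strand above and a new strand below), new signs $(s',s)$, new states $(0,1),(-1,1),(-1,0)$ respectively; if $s'\ne s$ and $(j,j')=(1,-1)$, join by a cup and delete both positions; if $s'=s$ and $(j,j')\in\{(1,0),(0,-1),(1,-1)\}$, join at a trivalent vertex whose third edge continues downward as one position of opposite sign with state $1,-1,0$ respectively. For dominant $(S,J)$ the algorithm ends with empty strings, producing a web with boundary $S$. *)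

theory Defs
  imports "HOL-Library.Poly_Mapping"
begin

type_synonym laurent = "int \<Rightarrow>\<^sub>0 int"

definition vpow :: "int \<Rightarrow> laurent" where
  "vpow k = Poly_Mapping.single k 1"

definition nonneg_coeffs :: "laurent \<Rightarrow> bool" where
  "nonneg_coeffs c \<longleftrightarrow> (\<forall>k. 0 \<le> Poly_Mapping.lookup c k)"

datatype sgn = Pos | Neg

fun neg_sgn :: "sgn \<Rightarrow> sgn" where
  "neg_sgn Pos = Neg" | "neg_sgn Neg = Pos"

(* a vector of V^S is given by its coordinates w.r.t. the basis e^S_J,
   indexed by state strings J (lists over {-1,0,1}) *)
type_synonym tensor = "int list \<Rightarrow> laurent"

definition state_string :: "nat \<Rightarrow> int list \<Rightarrow> bool" where
  "state_string n J \<longleftrightarrow> length J = n \<and> set J \<subseteq> {-1, 0, 1}"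

definition basis_vec :: "int list \<Rightarrow> tensor" where
  "basis_vec J = (\<lambda>K. if K = J then 1 else 0)"

(* b^{ab}: coefficients of e_1 e_{-1}, e_0 e_0, e_{-1} e_1 are 1, v^-1, v^-2
   (the same for b^{+-} and b^{-+}) *)
definition cup_tensor :: "sgn \<Rightarrow> sgn \<Rightarrow> tensor" where
  "cup_tensor a b J =
     (if J = [1, -1] then vpow 0
      else if J = [0, 0] then vpow (-1)
      else if J = [-1, 1] then vpow (-2)
      else 0)"

(* t^{sss} (the same formula for t^{+++} and t^{---}) *)
definition vertex_tensor :: "sgn \<Rightarrow> tensor" where
  "vertex_tensor s J =
     (if J = [1, 0, -1] then vpow 0
      else if J = [0, 1, -1] then vpow (-1)
      else if J = [1, -1, 0] then vpow (-1)
      else if J = [0, -1, 1] then vpow (-2)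
      else if J = [-1, 1, 0] then vpow (-2)
      else if J = [-1, 0, 1] then vpow (-3)
      else 0)"

definition cap_form :: "sgn \<Rightarrow> sgn \<Rightarrow> int \<Rightarrow> int \<Rightarrow> laurent" where
  "cap_form a b j j' =
     (if (j, j') = (-1, 1) then vpow 0
      else if (j, j') = (0, 0) then vpow 1
      else if (j, j') = (1, -1) then vpow 2
      else 0)"

(* insert a k-leg tensor t at positions i..i+k-1 (f (x) t placed at position i) *)
definition ins_at :: "nat \<Rightarrow> nat \<Rightarrow> tensor \<Rightarrow> tensor \<Rightarrow> tensor" where
  "ins_at i k t f = (\<lambda>J. if i + k \<le> length J
       then f (take i J @ drop (i + k) J) * t (take k (drop i J)) else 0)"

definition cap_at :: "nat \<Rightarrow> (int \<Rightarrow> int \<Rightarrow> laurent) \<Rightarrow> tensor \<Rightarrow> tensor" where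
  "cap_at i \<sigma> f = (\<lambda>J. if i \<le> length J
       then (\<Sum>a\<in>{-1, 0, 1}. \<Sum>b\<in>{-1, 0, 1}. \<sigma> a b * f (take i J @ [a, b] @ drop i J))
       else 0)"

(* Y piece: upper strands (s,s) at i,i+1, lower strand of sign -s at i.
   Isotoped: vertex t^{sss} to the right of the lower strand, whose first leg
   is capped with the lower strand. *)
definition Y_map :: "nat \<Rightarrow> sgn \<Rightarrow> tensor \<Rightarrow> tensor" where
  "Y_map i s f = cap_at i (cap_form (neg_sgn s) s) (ins_at (i + 1) 3 (vertex_tensor s) f)"

(* H piece: upper strands (s,s') at i,i+1, lower strands (s',s) at i,i+1, s' = -s.
   Isotoped: left vertex of type s with its first leg capped to the lower-left strand,
   right vertex of type s' with first leg capped to the third leg of the left vertex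
   and third leg capped to the lower-right strand. *)
definition H_map :: "nat \<Rightarrow> sgn \<Rightarrow> sgn \<Rightarrow> tensor \<Rightarrow> tensor" where
  "H_map i s s' f =
     cap_at (i + 2) (cap_form s' s)
      (cap_at (i + 1) (cap_form s s')
        (ins_at (i + 2) 3 (vertex_tensor s')
          (cap_at i (cap_form s' s)
            (ins_at (i + 1) 3 (vertex_tensor s) f))))"

(* grows str w: some complete run of the growth algorithm starting from the
   string str (list of (sign, state)) ends with the empty string and produces
   a web whose value is w.  The value of the web for str is the value of the
   piece attached at the first step, applied to the value of the web grown
   from the new (lower) string. *)
inductive grows :: "(sgn \<times> int) list \<Rightarrow> tensor \<Rightarrow> bool" where
  grow_empty: "grows [] (\<lambda>K. if K = [] then 1 else 0)"
| grow_H: "s' \<noteq> s \<Longrightarrow> (j, j', k, k') \<in> {(1, 0, 0, 1), (0, 0, -1, 1), (0, -1, -1, 0)} \<Longrightarrow>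
    grows (xs @ (s', k) # (s, k') # ys) w \<Longrightarrow>
    grows (xs @ (s, j) # (s', j') # ys) (H_map (length xs) s s' w)"
| grow_cup: "s' \<noteq> s \<Longrightarrow> grows (xs @ ys) w \<Longrightarrow>
    grows (xs @ (s, 1) # (s', -1) # ys) (ins_at (length xs) 2 (cup_tensor s s') w)"
| grow_Y: "(j, j', k) \<in> {(1, 0, 1), (0, -1, -1), (1, -1, 0)} \<Longrightarrow>
    grows (xs @ (neg_sgn s, k) # ys) w \<Longrightarrow>
    grows (xs @ (s, j) # (s, j') # ys) (Y_map (length xs) s w)"

(* weights as coordinates w.r.t. the fundamental weights (mu^+, mu^-) *)
definition mu_plus :: "int \<times> int" where "mu_plus = (1, 0)"
definition mu_minus :: "int \<times> int" where "mu_minus = (0, 1)"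
definition alpha1 :: "int \<times> int" where "alpha1 = (2, -1)"
definition alpha2 :: "int \<times> int" where "alpha2 = (-1, 2)"

definition padd :: "int \<times> int \<Rightarrow> int \<times> int \<Rightarrow> int \<times> int" where
  "padd x y = (fst x + fst y, snd x + snd y)"
definition psub :: "int \<times> int \<Rightarrow> int \<times> int \<Rightarrow> int \<times> int" where
  "psub x y = (fst x - fst y, snd x - snd y)"

fun wt :: "sgn \<Rightarrow> int \<Rightarrow> int \<times> int" where
  "wt Pos j = (if j = 1 then mu_plus
               else if j = 0 then psub mu_plus alpha1
               else psub (psub mu_plus alpha1) alpha2)"
| "wt Neg j = (if j = 1 then mu_minus
               else if j = 0 then psub mu_minus alpha2
               else psub (psub mu_minus alpha1) alpha2)"

definition partial_wt :: "sgn list \<Rightarrow> int list \<Rightarrow> nat \<Rightarrow> int \<times> int" where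
  "partial_wt S J k = foldr padd (map (\<lambda>l. wt (S ! l) (J ! l)) [0..<k]) (0, 0)"

definition dominant :: "sgn list \<Rightarrow> int list \<Rightarrow> bool" where
  "dominant S J \<longleftrightarrow> state_string (length S) J \<and>
     (\<forall>k \<le> length S. 0 \<le> fst (partial_wt S J k) \<and> 0 \<le> snd (partial_wt S J k)) \<and>
     partial_wt S J (length S) = (0, 0)"

definition lex_less :: "int list \<Rightarrow> int list \<Rightarrow> bool" where
  "lex_less J' J \<longleftrightarrow> (J', J) \<in> lexord {(a, b). a < b}"

end

theory Submission
  imports Defs
begin

(*
  Each piece attached by the growth algorithm (cup, Y or H) expresses the value of the web
  above it through the value of the web grown from the string below it: it acts on a block
  of adjacent tensor factors through a matrix with entries in N[v,v^-1] that is unitriangular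
  for the lexicographic order, with diagonal entry 1 at the pair (states consumed by the rule,
  states produced by it).  Such an operator maps a vector of the form
  e_T + (nonnegative combination of e_K with K < T) to a vector of the same form, so the
  triangularity follows by induction along the run of the algorithm.

  A run exists: the states of a dominant string start with 1 and end with -1, so some
  adjacent pair has j > j', and one of the rules applies there.  The rules preserve dominance
  and decrease the length of the string or, for the H rule (j, j') -> (j - 1, j' + 1), a
  positionally weighted sum of the states.
*)

lemma vpow_add: "vpow a * vpow b = vpow (a + b)"
  by (simp add: vpow_def mult_single)

lemma vpow_0 [simp]: "vpow 0 = 1"
  by (simp add: vpow_def one_poly_mapping.abs_eq)

lemma nonneg_coeffs_zero [simp]: "nonneg_coeffs 0"
  by (simp add: nonneg_coeffs_def)

lemma nonneg_coeffs_one [simp]: "nonneg_coeffs 1"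
  by (simp add: nonneg_coeffs_def lookup_one when_def)

lemma nonneg_coeffs_vpow [simp]: "nonneg_coeffs (vpow k)"
  by (simp add: nonneg_coeffs_def vpow_def lookup_single when_def)

lemma nonneg_coeffs_add: "nonneg_coeffs a \<Longrightarrow> nonneg_coeffs b \<Longrightarrow> nonneg_coeffs (a + b)"
  by (simp add: nonneg_coeffs_def lookup_add)

lemma nonneg_coeffs_mult:
  assumes "nonneg_coeffs a" "nonneg_coeffs b"
  shows "nonneg_coeffs (a * b)"
  using assms unfolding nonneg_coeffs_def lookup_mult Sum_any.expand_set
  by (intro allI sum_nonneg mult_nonneg_nonneg) (auto simp: when_def)

lemma nonneg_coeffs_sum: "(\<And>x. x \<in> I \<Longrightarrow> nonneg_coeffs (g x)) \<Longrightarrow> nonneg_coeffs (sum g I)"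
  by (induction I rule: infinite_finite_induct) (auto simp: nonneg_coeffs_add)

definition lex_le :: "int list \<Rightarrow> int list \<Rightarrow> bool" where
  "lex_le K T \<longleftrightarrow> K = T \<or> lex_less K T"

lemma lex_less_simps [simp]:
  "lex_less [] T \<longleftrightarrow> T \<noteq> []"
  "\<not> lex_less K []"
  "lex_less (a # K) (b # T) \<longleftrightarrow> a < b \<or> a = b \<and> lex_less K T"
  by (auto simp: lex_less_def neq_Nil_conv)

lemma lex_less_irrefl [simp]: "\<not> lex_less K K"
  by (induction K) auto

lemma lex_less_append_iff:
  assumes "length A = length X"
  shows "lex_less (A @ R) (X @ R') \<longleftrightarrow> lex_less A X \<or> A = X \<and> lex_less R R'"
  using assms
proof (induction A arbitrary: X)
  case (Cons a A)
  then show ?case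
    by (cases X) auto
qed simp

lemma lex_le_append_iff:
  assumes "length A = length X"
  shows "lex_le (A @ R) (X @ R') \<longleftrightarrow> lex_less A X \<or> A = X \<and> lex_le R R'"
  using assms by (auto simp: lex_le_def lex_less_append_iff)

lemma lex_le_replace_block:
  assumes "length A = length X" "length D = length P" "length U = length Q"
    and "lex_le (A @ D @ B) (X @ P @ Y)"
    and "lex_le D P \<Longrightarrow> lex_le U Q \<and> (U = Q \<longrightarrow> D = P)"
  shows "lex_le (A @ U @ B) (X @ Q @ Y)"
proof -
  have "lex_less A X \<or> A = X \<and> (lex_less D P \<or> D = P \<and> lex_le B Y)"
    using assms(1,2,4) by (simp add: lex_le_append_iff)
  moreover have "?thesis \<longleftrightarrow> lex_less A X \<or> A = X \<and> (lex_less U Q \<or> U = Q \<and> lex_le B Y)"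
    using assms(1,3) by (simp add: lex_le_append_iff)
  ultimately show ?thesis
    using assms(5) unfolding lex_le_def by fastforce
qed

lemma finite_state_strings: "finite {D. state_string n D}"
  using finite_lists_length_eq[of "{-1, 0, 1 :: int}" n]
  by (simp add: state_string_def conj_commute)

lemma state_strings_0: "{D. state_string 0 D} = {[]}"
  by (auto simp: state_string_def)

lemma state_strings_Suc:
  "{D. state_string (Suc n) D} = (\<lambda>(a, D). a # D) ` ({-1, 0, 1} \<times> {D. state_string n D})"
  by (auto simp: state_string_def length_Suc_conv)

lemma sum_state_strings_Suc:
  "(\<Sum>D | state_string (Suc n) D. g D) = (\<Sum>a\<in>{-1, 0, 1}. \<Sum>D | state_string n D. g (a # D))"
proof -
  have "inj_on (\<lambda>(a, D). a # D) ({-1, 0, 1} \<times> {D. state_string n D})"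
    by (auto simp: inj_on_def)
  then have "(\<Sum>D | state_string (Suc n) D. g D) =
      (\<Sum>(a, D)\<in>{-1, 0, 1} \<times> {D. state_string n D}. g (a # D))"
    unfolding state_strings_Suc by (simp add: sum.reindex comp_def case_prod_unfold)
  then show ?thesis
    by (simp only: sum.cartesian_product)
qed

lemma sum_state_strings_1: "(\<Sum>D | state_string 1 D. g D) = (\<Sum>a\<in>{-1, 0, 1}. g [a])"
  unfolding One_nat_def sum_state_strings_Suc state_strings_0 by simp

lemma sum_state_strings_2:
  "(\<Sum>D | state_string 2 D. g D) = (\<Sum>a\<in>{-1, 0, 1}. \<Sum>b\<in>{-1, 0, 1}. g [a, b])"
  unfolding numeral_2_eq_2 sum_state_strings_Suc state_strings_0 by simp

definition unitriangular :: "nat \<Rightarrow> int list \<Rightarrow> tensor \<Rightarrow> bool" where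
  "unitriangular n T w \<longleftrightarrow> w T = 1 \<and> (\<forall>K. nonneg_coeffs (w K)) \<and>
     (\<forall>K. w K \<noteq> 0 \<longrightarrow> state_string n K \<and> lex_le K T)"

lemma unitriangular_expansion:
  assumes "unitriangular n T w"
  shows "w K = basis_vec T K + (\<Sum>J' | state_string n J' \<and> lex_less J' T. w J' * basis_vec J' K)"
proof -
  have "finite {J'. state_string n J' \<and> lex_less J' T}"
    using finite_state_strings by (rule finite_subset[rotated]) auto
  then have "(\<Sum>J' | state_string n J' \<and> lex_less J' T. w J' * basis_vec J' K) =
      (if state_string n K \<and> lex_less K T then w K else 0)"
    by (simp add: basis_vec_def sum.delta if_distrib[of "\<lambda>x. w _ * x"] cong: if_cong)
  moreover have "w K = 0" if "K \<noteq> T" "\<not> (state_string n K \<and> lex_less K T)"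
    using assms that by (auto simp: unitriangular_def lex_le_def)
  ultimately show ?thesis
    using assms by (auto simp: unitriangular_def basis_vec_def)
qed

lemma split_list3:
  assumes "i + u \<le> length K"
  obtains A U B where "K = A @ U @ B" "length A = i" "length U = u"
proof
  show "K = take i K @ take u (drop i K) @ drop u (drop i K)"
    by (simp only: append_take_drop_id)
qed (use assms in simp_all)

text \<open>
  \<open>g\<close> arises from \<open>f\<close> by replacing the \<open>d\<close> tensor factors starting at position \<open>i\<close>
  by \<open>u\<close> factors, through the matrix \<open>M\<close>.
\<close>

locale block_operator =
  fixes M :: "int list \<Rightarrow> int list \<Rightarrow> laurent" and f g :: tensor and i u d :: nat
  assumes eval: "\<And>A U B. length A = i \<Longrightarrow> length U = u \<Longrightarrow>
                   g (A @ U @ B) = (\<Sum>D | state_string d D. M U D * f (A @ D @ B))"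
    and short: "\<And>K. length K < i + u \<Longrightarrow> g K = 0"
    and M_nonneg: "\<And>U D. nonneg_coeffs (M U D)"
    and M_support: "\<And>U D. length U = u \<Longrightarrow> M U D \<noteq> 0 \<Longrightarrow> set U \<subseteq> {-1, 0, 1}"
begin

lemma nonneg:
  assumes "\<And>K. nonneg_coeffs (f K)"
  shows "nonneg_coeffs (g K)"
proof (cases "length K < i + u")
  case False
  then obtain A U B where "K = A @ U @ B" "length A = i" "length U = u"
    using split_list3[of i u K] by auto
  then show ?thesis
    by (simp add: eval nonneg_coeffs_sum nonneg_coeffs_mult M_nonneg assms)
qed (simp add: short)

lemma nonzeroE:
  assumes "g K \<noteq> 0"
  obtains A U B D where "K = A @ U @ B" "length A = i" "length U = u"
    "state_string d D" "M U D \<noteq> 0" "f (A @ D @ B) \<noteq> 0"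
proof -
  have "i + u \<le> length K"
    using short assms by (meson not_le)
  then obtain A U B where K: "K = A @ U @ B" "length A = i" "length U = u"
    by (rule split_list3)
  have "(\<Sum>D | state_string d D. M U D * f (A @ D @ B)) \<noteq> 0"
    using assms eval[OF K(2,3), of B] unfolding K(1) by argo
  then obtain D where "state_string d D" "M U D * f (A @ D @ B) \<noteq> 0"
    by (rule sum.not_neutral_contains_not_neutral) simp
  with K that show ?thesis
    by (metis mult_zero_left mult_zero_right)
qed

lemma unitriangular:
  assumes f: "unitriangular m (X @ P @ Y) f"
    and lengths: "length X = i" "length P = d" "length Q = u" "m + u = n + d"
    and M_triangular: "\<And>U D. length U = u \<Longrightarrow> state_string d D \<Longrightarrow> M U D \<noteq> 0 \<Longrightarrow>
                         lex_le D P \<Longrightarrow> lex_le U Q \<and> (U = Q \<longrightarrow> D = P)"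
    and M_diag: "M Q P = 1"
  shows "unitriangular n (X @ Q @ Y) g"
proof -
  have f_lead: "f (X @ P @ Y) = 1" and f_nonneg: "\<And>K. nonneg_coeffs (f K)"
    and f_support: "\<And>K. f K \<noteq> 0 \<Longrightarrow> state_string m K \<and> lex_le K (X @ P @ Y)"
    using f by (auto simp: unitriangular_def)
  have entry: "M Q D * f (X @ D @ Y) = (if D = P then 1 else 0)" if D: "state_string d D" for D
  proof (cases "D = P")
    case False
    have "length D = length P"
      using D lengths by (simp add: state_string_def)
    then have "lex_le D P" if "f (X @ D @ Y) \<noteq> 0"
      using f_support[OF that] by (simp add: lex_le_append_iff) (auto simp: lex_le_def)
    then show ?thesis
      using M_triangular[of Q D] D False \<open>length Q = u\<close> by fastforce
  qed (simp add: M_diag f_lead)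
  have "state_string d P"
    using f_support[of "X @ P @ Y"] lengths by (auto simp: f_lead state_string_def)
  then have lead: "g (X @ Q @ Y) = 1"
    using eval[OF lengths(1,3)] entry finite_state_strings by simp
  have support: "state_string n K \<and> lex_le K (X @ Q @ Y)" if nonzero: "g K \<noteq> 0" for K
  proof -
    obtain A U B D where K: "K = A @ U @ B" "length A = i" "length U = u"
      and D: "state_string d D" "M U D \<noteq> 0" "f (A @ D @ B) \<noteq> 0"
      using nonzeroE[OF nonzero] .
    have "state_string m (A @ D @ B)" and below: "lex_le (A @ D @ B) (X @ P @ Y)"
      using f_support[OF D(3)] by auto
    then have "state_string n K"
      using M_support[OF K(3) D(2)] K D(1) lengths(4) by (auto simp: state_string_def)
    moreover have "lex_le K (X @ Q @ Y)"
      using lex_le_replace_block[OF _ _ _ below M_triangular[OF K(3) D(1,2)]] K D(1) lengths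
      by (simp add: state_string_def)
    ultimately show ?thesis ..
  qed
  show ?thesis
    using lead nonneg[OF f_nonneg] support by (simp add: unitriangular_def)
qed

end

definition pairing :: "int \<Rightarrow> int \<Rightarrow> laurent" where
  "pairing = cap_form Pos Neg"

definition vertex_coeff :: "int list \<Rightarrow> laurent" where
  "vertex_coeff = vertex_tensor Pos"

lemma cap_form_eq_pairing: "cap_form a b = pairing"
  by (simp add: pairing_def fun_eq_iff cap_form_def)

lemma vertex_tensor_eq_vertex_coeff: "vertex_tensor s = vertex_coeff"
  by (simp add: vertex_coeff_def fun_eq_iff vertex_tensor_def)

lemma nonneg_coeffs_pairing [simp]: "nonneg_coeffs (pairing j j')"
  by (simp add: pairing_def cap_form_def)

lemma nonneg_coeffs_vertex_coeff [simp]: "nonneg_coeffs (vertex_coeff J)"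
  by (simp add: vertex_coeff_def vertex_tensor_def)

lemma nonneg_coeffs_cup_tensor [simp]: "nonneg_coeffs (cup_tensor s s' J)"
  by (simp add: cup_tensor_def)

lemma vertex_coeff_nonzero:
  "vertex_coeff J \<noteq> 0 \<Longrightarrow>
     J \<in> {[1, 0, -1], [0, 1, -1], [1, -1, 0], [0, -1, 1], [-1, 1, 0], [-1, 0, 1]}"
  by (auto simp: vertex_coeff_def vertex_tensor_def split: if_splits)

lemma cup_tensor_nonzero: "cup_tensor s s' J \<noteq> 0 \<Longrightarrow> J \<in> {[1, -1], [0, 0], [-1, 1]}"
  by (auto simp: cup_tensor_def split: if_splits)

lemma sum_pairing_left:
  "(\<Sum>a\<in>{-1, 0, 1}. \<Sum>b\<in>{-1, 0, 1}. pairing a b * F a b) =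
     (\<Sum>a\<in>{-1, 0, 1}. pairing a (-a) * F a (-a))"
  by (simp add: pairing_def cap_form_def)

lemma sum_pairing_right:
  "(\<Sum>a\<in>{-1, 0, 1}. \<Sum>b\<in>{-1, 0, 1}. pairing a b * F a b) =
     (\<Sum>b\<in>{-1, 0, 1}. pairing (-b) b * F (-b) b)"
  by (simp add: pairing_def cap_form_def)

lemma ins_at_eval: "length A = i \<Longrightarrow> length U = k \<Longrightarrow> ins_at i k t f (A @ U @ B) = f (A @ B) * t U"
  by (simp add: ins_at_def)

lemma cap_at_eval:
  "length A = i \<Longrightarrow>
     cap_at i \<sigma> f (A @ B) = (\<Sum>a\<in>{-1, 0, 1}. \<Sum>b\<in>{-1, 0, 1}. \<sigma> a b * f (A @ [a, b] @ B))"
  by (simp add: cap_at_def)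

lemma block_operator_cup:
  "block_operator (\<lambda>U D. cup_tensor s s' U) f (ins_at i 2 (cup_tensor s s') f) i 2 0"
  by unfold_locales (auto simp: ins_at_def state_strings_0 mult.commute dest: cup_tensor_nonzero)

lemma cup_unitriangular:
  assumes "unitriangular m (X @ Y) f"
  shows "unitriangular (m + 2) (X @ [1, -1] @ Y) (ins_at (length X) 2 (cup_tensor s s') f)"
proof (rule block_operator.unitriangular[OF block_operator_cup, where P = "[]"])
  show "lex_le U [1, -1] \<and> (U = [1, -1] \<longrightarrow> D = [])"
    if "state_string 0 D" "cup_tensor s s' U \<noteq> 0" for U D
    using that cup_tensor_nonzero[OF that(2)] by (auto simp: lex_le_def state_string_def)
qed (use assms in \<open>simp_all add: cup_tensor_def\<close>)

fun Y_coeff :: "int list \<Rightarrow> int list \<Rightarrow> laurent" where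
  "Y_coeff [p, y] [a] = pairing a (-a) * vertex_coeff [-a, p, y]"
| "Y_coeff _ _ = 0"

lemma Y_coeff_nonzero:
  assumes "Y_coeff U D \<noteq> 0"
  obtains p y a where "U = [p, y]" "D = [a]" "vertex_coeff [-a, p, y] \<noteq> 0"
  using assms by (cases "(U, D)" rule: Y_coeff.cases) auto

lemma Y_map_eval:
  assumes "length A = i" "length U = 2"
  shows "Y_map i s f (A @ U @ B) = (\<Sum>D | state_string 1 D. Y_coeff U D * f (A @ D @ B))"
proof -
  obtain p y where U: "U = [p, y]"
    using assms(2) by (auto simp: numeral_2_eq_2 length_Suc_conv)
  have "ins_at (i + 1) 3 vertex_coeff f (A @ [a, b] @ U @ B) = f (A @ [a] @ B) * vertex_coeff (b # U)"
    for a b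
    using ins_at_eval[of "A @ [a]" "i + 1" "b # U" 3] assms by simp
  then have "Y_map i s f (A @ U @ B) =
      (\<Sum>a\<in>{-1, 0, 1}. \<Sum>b\<in>{-1, 0, 1}. pairing a b * (f (A @ [a] @ B) * vertex_coeff (b # U)))"
    unfolding Y_map_def cap_form_eq_pairing vertex_tensor_eq_vertex_coeff
    using assms(1) by (simp add: cap_at_eval)
  also have "\<dots> = (\<Sum>a\<in>{-1, 0, 1}. pairing a (-a) * (f (A @ [a] @ B) * vertex_coeff (-a # U)))"
    by (rule sum_pairing_left)
  finally show ?thesis
    unfolding sum_state_strings_1 U by (simp add: mult_ac)
qed

lemma block_operator_Y: "block_operator Y_coeff f (Y_map i s f) i 2 1"
proof
  show "Y_map i s f (A @ U @ B) = (\<Sum>D | state_string 1 D. Y_coeff U D * f (A @ D @ B))"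
    if "length A = i" "length U = 2" for A U B
    using that by (rule Y_map_eval)
  show "Y_map i s f K = 0" if "length K < i + 2" for K
    using that by (simp add: Y_map_def cap_at_def ins_at_def)
  show "nonneg_coeffs (Y_coeff U D)" for U D
    by (cases "(U, D)" rule: Y_coeff.cases) (simp_all add: nonneg_coeffs_mult)
  show "set U \<subseteq> {-1, 0, 1}" if "Y_coeff U D \<noteq> 0" for U D
  proof -
    obtain p y a where "U = [p, y]" "vertex_coeff [-a, p, y] \<noteq> 0"
      using Y_coeff_nonzero[OF \<open>Y_coeff U D \<noteq> 0\<close>] by metis
    with vertex_coeff_nonzero[OF this(2)] show ?thesis
      by auto
  qed
qed

lemma Y_coeff_triangular:
  assumes "(j, j', k) \<in> {(1, 0, 1), (0, -1, -1), (1, -1, 0)}" "Y_coeff U D \<noteq> 0" "lex_le D [k]"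
  shows "lex_le U [j, j'] \<and> (U = [j, j'] \<longrightarrow> D = [k])"
proof -
  obtain p y a where "U = [p, y]" "D = [a]" "vertex_coeff [-a, p, y] \<noteq> 0"
    using Y_coeff_nonzero[OF assms(2)] by metis
  with vertex_coeff_nonzero[OF this(3)] assms(1,3) show ?thesis
    by (auto simp: lex_le_def)
qed

lemma Y_coeff_diag:
  assumes "(j, j', k) \<in> {(1, 0, 1), (0, -1, -1), (1, -1, 0)}"
  shows "Y_coeff [j, j'] [k] = 1"
  using assms by (elim insertE emptyE)
    (simp_all add: pairing_def cap_form_def vertex_coeff_def vertex_tensor_def vpow_add)

lemma Y_unitriangular:
  assumes "(j, j', k) \<in> {(1, 0, 1), (0, -1, -1), (1, -1, 0)}" "unitriangular m (X @ [k] @ Y) f"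
  shows "unitriangular (m + 1) (X @ [j, j'] @ Y) (Y_map (length X) s f)"
proof (rule block_operator.unitriangular[OF block_operator_Y assms(2)])
  show "lex_le U [j, j'] \<and> (U = [j, j'] \<longrightarrow> D = [k])"
    if "Y_coeff U D \<noteq> 0" "lex_le D [k]" for U D
    using Y_coeff_triangular[OF assms(1) that] .
  show "Y_coeff [j, j'] [k] = 1"
    using Y_coeff_diag[OF assms(1)] .
qed simp_all

text \<open>
  \<open>a\<close>, \<open>b\<close> are the states of the lower strands and \<open>c\<close> that of the horizontal edge;
  each cap forces opposite states at its two legs.
\<close>

fun H_coeff :: "int list \<Rightarrow> int list \<Rightarrow> laurent" where
  "H_coeff [p, y] [a, b] = (\<Sum>c\<in>{-1, 0, 1}.
     pairing a (-a) * pairing c (-c) * pairing (-b) b * vertex_coeff [-a, p, c] * vertex_coeff [-c, y, -b])"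
| "H_coeff _ _ = 0"

lemma H_coeff_nonzero:
  assumes "H_coeff U D \<noteq> 0"
  obtains p y a b c where "U = [p, y]" "D = [a, b]"
    "vertex_coeff [-a, p, c] \<noteq> 0" "vertex_coeff [-c, y, -b] \<noteq> 0"
proof (cases "(U, D)" rule: H_coeff.cases)
  case (1 p y a b)
  then have U: "U = [p, y]" and D: "D = [a, b]"
    by simp_all
  have "(\<Sum>c\<in>{-1, 0, 1}. pairing a (-a) * pairing c (-c) * pairing (-b) b *
      vertex_coeff [-a, p, c] * vertex_coeff [-c, y, -b]) \<noteq> 0"
    using assms unfolding U D H_coeff.simps .
  then obtain c where "pairing a (-a) * pairing c (-c) * pairing (-b) b *
      vertex_coeff [-a, p, c] * vertex_coeff [-c, y, -b] \<noteq> 0"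
    by (rule sum.not_neutral_contains_not_neutral)
  with that U D show ?thesis
    by auto
qed (use assms in auto)

lemma H_map_unfold:
  assumes A: "length A = i"
  shows "H_map i s s' f (A @ [p, y] @ B) =
    (\<Sum>e\<in>{-1, 0, 1}. \<Sum>g\<in>{-1, 0, 1}. pairing e g * (\<Sum>c\<in>{-1, 0, 1}. \<Sum>d\<in>{-1, 0, 1}. pairing c d *
      ((\<Sum>a\<in>{-1, 0, 1}. \<Sum>b\<in>{-1, 0, 1}. pairing a b * (f (A @ a # g # B) * vertex_coeff [b, p, c])) *
        vertex_coeff [d, y, e])))"
proof -
  define h1 where "h1 = ins_at (i + 1) 3 vertex_coeff f"
  define h2 where "h2 = cap_at i pairing h1"
  define h3 where "h3 = ins_at (i + 2) 3 vertex_coeff h2"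
  define h4 where "h4 = cap_at (i + 1) pairing h3"
  have H: "H_map i s s' f = cap_at (i + 2) pairing h4"
    unfolding H_map_def h1_def h2_def h3_def h4_def cap_form_eq_pairing vertex_tensor_eq_vertex_coeff ..
  have E5: "cap_at (i + 2) pairing h4 (A @ p # y # B) =
      (\<Sum>e\<in>{-1, 0, 1}. \<Sum>g\<in>{-1, 0, 1}. pairing e g * h4 (A @ p # y # e # g # B))"
    using cap_at_eval[of "A @ [p, y]" "i + 2" pairing h4 B] A by simp
  have E4: "h4 (A @ p # y # e # g # B) =
      (\<Sum>c\<in>{-1, 0, 1}. \<Sum>d\<in>{-1, 0, 1}. pairing c d * h3 (A @ p # c # d # y # e # g # B))" for e g
    using cap_at_eval[of "A @ [p]" "i + 1" pairing h3 "y # e # g # B"] A by (simp add: h4_def)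
  have E3: "h3 (A @ p # c # d # y # e # g # B) = h2 (A @ p # c # g # B) * vertex_coeff [d, y, e]"
    for c d e g
    using ins_at_eval[of "A @ [p, c]" "i + 2" "[d, y, e]" 3 vertex_coeff h2 "g # B"] A
    by (simp add: h3_def)
  have E2: "h2 (A @ p # c # g # B) =
      (\<Sum>a\<in>{-1, 0, 1}. \<Sum>b\<in>{-1, 0, 1}. pairing a b * h1 (A @ a # b # p # c # g # B))" for c g
    using cap_at_eval[of A i pairing h1 "p # c # g # B"] A by (simp add: h2_def)
  have E1: "h1 (A @ a # b # p # c # g # B) = f (A @ a # g # B) * vertex_coeff [b, p, c]" for a b c g
    using ins_at_eval[of "A @ [a]" "i + 1" "[b, p, c]" 3 vertex_coeff f "g # B"] A
    by (simp add: h1_def)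
  show ?thesis
    by (simp only: H E5 E4 E3 E2 E1 append.simps)
qed

lemma H_map_eval:
  assumes "length A = i" "length U = 2"
  shows "H_map i s s' f (A @ U @ B) = (\<Sum>D | state_string 2 D. H_coeff U D * f (A @ D @ B))"
proof -
  obtain p y where U: "U = [p, y]"
    using assms(2) by (auto simp: numeral_2_eq_2 length_Suc_conv)
  have "H_map i s s' f (A @ U @ B) = (\<Sum>g\<in>{-1, 0, 1}. pairing (-g) g * (\<Sum>c\<in>{-1, 0, 1}. pairing c (-c) *
        ((\<Sum>a\<in>{-1, 0, 1}. pairing a (-a) * (f (A @ a # g # B) * vertex_coeff [-a, p, c])) *
          vertex_coeff [-c, y, -g])))"
    unfolding U H_map_unfold[OF assms(1)] by (subst sum_pairing_right) (simp only: sum_pairing_left)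
  also have "\<dots> = (\<Sum>g\<in>{-1, 0, 1}. \<Sum>c\<in>{-1, 0, 1}. \<Sum>a\<in>{-1, 0, 1}. pairing (-g) g * (pairing c (-c) *
        ((pairing a (-a) * (f (A @ a # g # B) * vertex_coeff [-a, p, c])) * vertex_coeff [-c, y, -g])))"
    by (simp only: sum_distrib_left sum_distrib_right)
  also have "\<dots> = (\<Sum>a\<in>{-1, 0, 1}. \<Sum>g\<in>{-1, 0, 1}. \<Sum>c\<in>{-1, 0, 1}. pairing (-g) g * (pairing c (-c) *
        ((pairing a (-a) * (f (A @ a # g # B) * vertex_coeff [-a, p, c])) * vertex_coeff [-c, y, -g])))"
    by (rule trans[OF sum.cong[OF refl sum.swap] sum.swap])
  also have "\<dots> = (\<Sum>D | state_string 2 D. H_coeff U D * f (A @ D @ B))"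
    unfolding sum_state_strings_2 U H_coeff.simps sum_distrib_right
    by (intro sum.cong refl) (simp only: append.simps mult_ac)
  finally show ?thesis .
qed

lemma block_operator_H: "block_operator H_coeff f (H_map i s s' f) i 2 2"
proof
  show "H_map i s s' f (A @ U @ B) = (\<Sum>D | state_string 2 D. H_coeff U D * f (A @ D @ B))"
    if "length A = i" "length U = 2" for A U B
    using that by (rule H_map_eval)
  show "H_map i s s' f K = 0" if "length K < i + 2" for K
    using that by (simp add: H_map_def cap_at_def)
  show "nonneg_coeffs (H_coeff U D)" for U D
    by (cases "(U, D)" rule: H_coeff.cases) (simp_all add: nonneg_coeffs_add nonneg_coeffs_mult)
  show "set U \<subseteq> {-1, 0, 1}" if "H_coeff U D \<noteq> 0" for U D
  proof -
    obtain p y a b c where "U = [p, y]"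
      "vertex_coeff [-a, p, c] \<noteq> 0" "vertex_coeff [-c, y, -b] \<noteq> 0"
      using H_coeff_nonzero[OF \<open>H_coeff U D \<noteq> 0\<close>] by metis
    with vertex_coeff_nonzero[OF this(2)] vertex_coeff_nonzero[OF this(3)] show ?thesis
      by auto
  qed
qed

lemma H_coeff_triangular:
  assumes "(j, j', k, k') \<in> {(1, 0, 0, 1), (0, 0, -1, 1), (0, -1, -1, 0)}"
    and "H_coeff U D \<noteq> 0" "lex_le D [k, k']"
  shows "lex_le U [j, j'] \<and> (U = [j, j'] \<longrightarrow> D = [k, k'])"
proof -
  obtain p y a b c where "U = [p, y]" "D = [a, b]"
    "vertex_coeff [-a, p, c] \<noteq> 0" "vertex_coeff [-c, y, -b] \<noteq> 0"
    using H_coeff_nonzero[OF assms(2)] by metis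
  moreover note vertex_coeff_nonzero[OF this(3)] vertex_coeff_nonzero[OF this(4)]
  ultimately show ?thesis
    using assms(1,3) by (elim insertE emptyE; simp add: lex_le_def)
qed

lemma H_coeff_diag:
  assumes "(j, j', k, k') \<in> {(1, 0, 0, 1), (0, 0, -1, 1), (0, -1, -1, 0)}"
  shows "H_coeff [j, j'] [k, k'] = 1"
  using assms by (elim insertE emptyE)
    (simp_all add: pairing_def cap_form_def vertex_coeff_def vertex_tensor_def vpow_add)

lemma H_unitriangular:
  assumes "(j, j', k, k') \<in> {(1, 0, 0, 1), (0, 0, -1, 1), (0, -1, -1, 0)}"
    and "unitriangular m (X @ [k, k'] @ Y) f"
  shows "unitriangular m (X @ [j, j'] @ Y) (H_map (length X) s s' f)"
proof (rule block_operator.unitriangular[OF block_operator_H assms(2)])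
  show "lex_le U [j, j'] \<and> (U = [j, j'] \<longrightarrow> D = [k, k'])"
    if "H_coeff U D \<noteq> 0" "lex_le D [k, k']" for U D
    using H_coeff_triangular[OF assms(1) that] .
  show "H_coeff [j, j'] [k, k'] = 1"
    using H_coeff_diag[OF assms(1)] .
qed simp_all

lemma grows_unitriangular: "grows str w \<Longrightarrow> unitriangular (length str) (map snd str) w"
proof (induction rule: grows.induct)
  case grow_empty
  show ?case
    by (simp add: unitriangular_def state_string_def lex_le_def)
next
  case (grow_H s' s j j' k k' xs ys w)
  then show ?case
    using H_unitriangular[of j j' k k' "length (xs @ (s', k) # (s, k') # ys)" "map snd xs"] by simp
next
  case (grow_cup s' s xs ys w)
  then show ?case
    using cup_unitriangular[of "length (xs @ ys)" "map snd xs"] by simp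
next
  case (grow_Y j j' k xs s ys w)
  then show ?case
    using Y_unitriangular[of j j' k "length (xs @ (neg_sgn s, k) # ys)" "map snd xs"] by simp
qed

lemma wt_simps [simp]:
  "wt Pos 1 = (1, 0)" "wt Pos 0 = (-1, 1)" "wt Pos (-1) = (0, -1)"
  "wt Neg 1 = (0, 1)" "wt Neg 0 = (1, -1)" "wt Neg (-1) = (-1, 0)"
  by (simp_all add: mu_plus_def mu_minus_def alpha1_def alpha2_def psub_def)

declare wt.simps [simp del]

lemma padd_Pair [simp]: "padd (a, b) (c, d) = (a + c, b + d)"
  by (simp add: padd_def)

definition dominant_weight :: "int \<times> int \<Rightarrow> bool" where
  "dominant_weight p \<longleftrightarrow> 0 \<le> fst p \<and> 0 \<le> snd p"

fun walk_end :: "int \<times> int \<Rightarrow> (sgn \<times> int) list \<Rightarrow> int \<times> int" where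
  "walk_end p [] = p"
| "walk_end p ((s, j) # r) = walk_end (padd p (wt s j)) r"

fun stays_dominant :: "int \<times> int \<Rightarrow> (sgn \<times> int) list \<Rightarrow> bool" where
  "stays_dominant p [] = True"
| "stays_dominant p ((s, j) # r) \<longleftrightarrow>
     j \<in> {-1, 0, 1} \<and> dominant_weight (padd p (wt s j)) \<and> stays_dominant (padd p (wt s j)) r"

definition dominant_from :: "int \<times> int \<Rightarrow> (sgn \<times> int) list \<Rightarrow> bool" where
  "dominant_from p str \<longleftrightarrow> stays_dominant p str \<and> walk_end p str = (0, 0)"

lemma dominant_from_simps [simp]:
  "dominant_from p [] \<longleftrightarrow> p = (0, 0)"
  "dominant_from p ((s, j) # r) \<longleftrightarrow>
     j \<in> {-1, 0, 1} \<and> dominant_weight (padd p (wt s j)) \<and> dominant_from (padd p (wt s j)) r"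
  by (auto simp: dominant_from_def)

lemma dominant_from_append:
  "dominant_from p (xs @ zs) \<longleftrightarrow> stays_dominant p xs \<and> dominant_from (walk_end p xs) zs"
  by (induction p xs rule: walk_end.induct) simp_all

lemma dominant_weight_walk_end:
  "dominant_weight p \<Longrightarrow> stays_dominant p xs \<Longrightarrow> dominant_weight (walk_end p xs)"
  by (induction p xs rule: walk_end.induct) auto

lemma dominant_from_hd:
  assumes "dominant_from (0, 0) str" "str \<noteq> []"
  shows "snd (hd str) = 1"
proof -
  obtain s j r where "str = (s, j) # r"
    using assms(2) by (metis list.exhaust surj_pair)
  with assms(1) show ?thesis
    by (cases s) (auto simp: dominant_weight_def)
qed

lemma dominant_from_last:
  assumes "dominant_from (0, 0) str" "str \<noteq> []"
  shows "snd (last str) = -1"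
proof -
  obtain xs s j where str: "str = xs @ [(s, j)]"
    using assms(2) by (metis append_butlast_last_id surj_pair)
  have "dominant_weight (walk_end (0, 0) xs)" "dominant_from (walk_end (0, 0) xs) [(s, j)]"
    using assms(1) dominant_weight_walk_end
    by (auto simp: str dominant_from_append dominant_weight_def)
  then show ?thesis
    by (cases s; cases "walk_end (0, 0) xs") (auto simp: dominant_weight_def str)
qed

lemma partial_wt_Suc: "partial_wt S J (Suc k) = padd (partial_wt S J k) (wt (S ! k) (J ! k))"
proof -
  have "foldr padd xs z = (sum_list (map fst xs) + fst z, sum_list (map snd xs) + snd z)" for xs z
    by (induction xs arbitrary: z) (auto simp: padd_def)
  then show ?thesis
    by (simp add: partial_wt_def padd_def)
qed

lemma dominant_imp_dominant_from:
  assumes "dominant S J"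
  shows "dominant_from (0, 0) (zip S J)"
proof -
  have len: "length J = length S" and states: "set J \<subseteq> {-1, 0, 1}"
    using assms by (auto simp: dominant_def state_string_def)
  have partial: "dominant_weight (partial_wt S J k)" if "k \<le> length S" for k
    using assms that unfolding dominant_def dominant_weight_def by blast
  have "dominant_from (partial_wt S J k) (drop k (zip S J))" if "k \<le> length S" for k
    using that
  proof (induction rule: inc_induct)
    case base
    then show ?case
      using assms by (simp add: dominant_def)
  next
    case (step k)
    have "drop k (zip S J) = (S ! k, J ! k) # drop (Suc k) (zip S J)"
      using Cons_nth_drop_Suc[of k "zip S J"] step.hyps len by simp
    moreover have "J ! k \<in> {-1, 0, 1}"
      using states step.hyps len nth_mem by (metis subset_iff)
    moreover have "dominant_weight (partial_wt S J (Suc k))"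
      using partial step.hyps by simp
    ultimately show ?case
      using step.IH by (simp only: partial_wt_Suc dominant_from_simps)
  qed
  from this[of 0] show ?thesis
    by (simp add: partial_wt_def)
qed

inductive growth_rule :: "(sgn \<times> int) list \<Rightarrow> (sgn \<times> int) list \<Rightarrow> bool" where
  rule_Y: "(j, j', k) \<in> {(1, 0, 1), (0, -1, -1), (1, -1, 0)} \<Longrightarrow>
    growth_rule [(s, j), (s, j')] [(neg_sgn s, k)]"
| rule_cup: "s' \<noteq> s \<Longrightarrow> growth_rule [(s, 1), (s', -1)] []"
| rule_H: "s' \<noteq> s \<Longrightarrow> (j, j', k, k') \<in> {(1, 0, 0, 1), (0, 0, -1, 1), (0, -1, -1, 0)} \<Longrightarrow>
    growth_rule [(s, j), (s', j')] [(s', k), (s, k')]"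

lemma growth_rule_exists:
  assumes "j \<in> {-1, 0, 1}" "j' \<in> {-1, 0, 1}" "j' < j"
  shows "\<exists>zs. growth_rule [(s, j), (s', j')] zs"
proof -
  consider "s' = s" | "s' \<noteq> s" "j = 1" "j' = -1" | "s' \<noteq> s" "(j, j') \<in> {(1, 0), (0, -1)}"
    using assms by auto
  then show ?thesis
  proof cases
    case 1
    have "(j, j', j + j') \<in> {(1, 0, 1), (0, -1, -1), (1, -1, 0)}"
      using assms by auto
    with 1 show ?thesis
      by (blast intro: rule_Y)
  next
    case 2
    then show ?thesis
      by (blast intro: rule_cup)
  next
    case 3
    then have "(j, j', j - 1, j' + 1) \<in> {(1, 0, 0, 1), (0, 0, -1, 1), (0, -1, -1, 0)}"
      by auto
    with 3 show ?thesis
      by (blast intro: rule_H)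
  qed
qed

lemma growth_rule_grows:
  "growth_rule ab zs \<Longrightarrow> grows (xs @ zs @ ys) w \<Longrightarrow> \<exists>w'. grows (xs @ ab @ ys) w'"
proof (induction rule: growth_rule.induct)
  case (rule_Y j j' k s)
  then show ?case
    using grow_Y[of j j' k xs s ys w] by auto
next
  case (rule_cup s' s)
  then show ?case
    using grow_cup[of s' s xs ys w] by auto
next
  case (rule_H s' s j j' k k')
  then show ?case
    using grow_H[of s' s j j' k k' xs ys w] by auto
qed

lemma growth_rule_dominant:
  "growth_rule ab zs \<Longrightarrow> dominant_weight q \<Longrightarrow> dominant_from q (ab @ ys) \<Longrightarrow>
     dominant_from q (zs @ ys)"
proof (induction rule: growth_rule.induct)
  case (rule_Y j j' k s)
  then show ?case
    by (cases s; cases q; elim insertE emptyE; simp add: dominant_weight_def)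
next
  case (rule_cup s' s)
  then show ?case
    by (cases s; cases s'; cases q) (simp_all add: dominant_weight_def)
next
  case (rule_H s' s j j' k k')
  then show ?case
    by (cases s; cases s'; cases q; elim insertE emptyE; simp add: dominant_weight_def)
qed

fun descent_measure :: "(sgn \<times> int) list \<Rightarrow> nat" where
  "descent_measure [] = 0"
| "descent_measure ((s, j) # r) = nat (j + 1) * Suc (length r) + descent_measure r"

abbreviation growth_order :: "((sgn \<times> int) list \<times> (sgn \<times> int) list) set" where
  "growth_order \<equiv> measures [length, descent_measure]"

lemma growth_order_append_left:
  "(zs, zs') \<in> growth_order \<Longrightarrow> (xs @ zs, xs @ zs') \<in> growth_order"
proof (induction xs rule: descent_measure.induct)
  case (2 s j r)
  then show ?case
    by (cases "length zs = length zs'") simp_all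
qed simp

lemma growth_rule_decreases: "growth_rule ab zs \<Longrightarrow> (zs @ ys, ab @ ys) \<in> growth_order"
  by (induction rule: growth_rule.induct) auto

lemma adjacent_descent:
  fixes f :: "'a \<Rightarrow> 'b::linorder"
  shows "xs \<noteq> [] \<Longrightarrow> f (last xs) < f (hd xs) \<Longrightarrow>
    \<exists>as a b bs. xs = as @ a # b # bs \<and> f b < f a"
proof (induction xs)
  case (Cons x r)
  show ?case
  proof (cases "r \<noteq> [] \<and> f (hd r) < f x")
    case True
    then show ?thesis
      by (intro exI[of _ "[]"]) (auto simp: neq_Nil_conv)
  next
    case False
    then have "r \<noteq> []" "f (last r) < f (hd r)"
      using Cons.prems by (auto simp: not_less split: if_splits)
    then obtain as a b bs where "r = as @ a # b # bs" "f b < f a"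
      using Cons.IH by blast
    then show ?thesis
      by (intro exI[of _ "x # as"]) auto
  qed
qed simp

lemma dominant_from_grows: "dominant_from (0, 0) str \<Longrightarrow> \<exists>w. grows str w"
proof (induction str rule: wf_induct_rule[OF wf_measures[of "[length, descent_measure]"]])
  case (1 str)
  show ?case
  proof (cases "str = []")
    case True
    then show ?thesis
      using grow_empty by blast
  next
    case False
    then have "snd (last str) < snd (hd str)"
      using dominant_from_hd[OF "1.prems"] dominant_from_last[OF "1.prems"] by simp
    then obtain xs s j s' j' ys where str: "str = xs @ [(s, j), (s', j')] @ ys" and "j' < j"
      using adjacent_descent[OF False, of snd] by fastforce
    define q where "q = walk_end (0, 0) xs"
    have xs: "stays_dominant (0, 0) xs" and rest: "dominant_from q ([(s, j), (s', j')] @ ys)"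
      using "1.prems" by (simp_all add: str q_def dominant_from_append)
    then obtain zs where rule: "growth_rule [(s, j), (s', j')] zs"
      using growth_rule_exists \<open>j' < j\<close> by fastforce
    have "dominant_weight q"
      using dominant_weight_walk_end xs by (simp add: q_def dominant_weight_def)
    then have "dominant_from (0, 0) (xs @ zs @ ys)"
      using growth_rule_dominant[OF rule _ rest] xs by (simp add: dominant_from_append q_def)
    moreover have "(xs @ zs @ ys, str) \<in> growth_order"
      using growth_order_append_left[OF growth_rule_decreases[OF rule]] by (simp add: str)
    ultimately obtain w where "grows (xs @ zs @ ys) w"
      using "1.IH" by blast
    then show ?thesis
      using growth_rule_grows[OF rule] str by blast
  qed
qed

theorem theorem6:
  fixes S :: "sgn list" and J :: "int list"
  assumes "dominant S J"
  shows "(\<exists>w. grows (zip S J) w) \<and>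
         (\<forall>w. grows (zip S J) w \<longrightarrow>
            (\<exists>c :: int list \<Rightarrow> laurent.
               (\<forall>J'. nonneg_coeffs (c J')) \<and>
               (\<forall>K. w K = basis_vec J K +
                   (\<Sum>J'\<in>{J'. state_string (length S) J' \<and> lex_less J' J}. c J' * basis_vec J' K))))"
proof (intro conjI allI impI)
  show "\<exists>w. grows (zip S J) w"
    using dominant_from_grows[OF dominant_imp_dominant_from[OF assms]] .
  fix w
  assume "grows (zip S J) w"
  moreover have "length J = length S"
    using assms by (simp add: dominant_def state_string_def)
  ultimately have "unitriangular (length S) J w"
    using grows_unitriangular by fastforce
  then show "\<exists>c :: int list \<Rightarrow> laurent. (\<forall>J'. nonneg_coeffs (c J')) \<and>
      (\<forall>K. w K = basis_vec J K +
        (\<Sum>J'\<in>{J'. state_string (length S) J' \<and> lex_less J' J}. c J' * basis_vec J' K))"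
    using unitriangular_expansion by (intro exI[of _ w]) (auto simp: unitriangular_def)
qed

end
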